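(* Let $E$ be a graph. If the collection of unitary equivalence classes of irreducible $*$-representations of $C^*(E)$ is countable (finite or countably infinite), then $E$ has no cycles.
   Context: A graph $E=(E^0,E^1,r,s)$ has vertex set $E^0$, edge set $E^1$, range and source maps; no countability assumed. A vertex is regular if it emits a finite nonzero number of edges. A cycle is a path $e_1\cdots e_n$ ($n\ge1$, $r(e_i)=s(e_{i+1})$) with $s(e_1)=r(e_n)$. $C^*(E)$ is the universal $C^*$-algebra generated by mutually orthogonal projections $p_v$ ($v\in E^0$) and partial isometries $s_e$ ($e\in E^1$) with mutually orthogonal ranges, with $s_e^*s_e=p_{r(e)}$, $s_es_e^*\le p_{s(e)}$, and $p_v=\sum_{s(e)=v}s_es_e^*$ for each regular $v$. Two $*$-representations are unitarily equivalent if intertwined by a unitary. *)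

theory Defs
  imports "HOL-Analysis.Analysis"
begin

text \<open>A graph is given by a vertex set E0 :: 'v set, an edge set E1 :: 'e set and
  range and source maps r, s :: 'e => 'v (assumed to map E1 into E0).\<close>

definition regular_vertex :: "'e set \<Rightarrow> ('e \<Rightarrow> 'v) \<Rightarrow> 'v \<Rightarrow> bool" where
  "regular_vertex E1 src v \<longleftrightarrow> finite {e \<in> E1. src e = v} \<and> {e \<in> E1. src e = v} \<noteq> {}"

definition has_cycle :: "'e set \<Rightarrow> ('e \<Rightarrow> 'v) \<Rightarrow> ('e \<Rightarrow> 'v) \<Rightarrow> bool" where
  "has_cycle E1 rng src \<longleftrightarrow>
     (\<exists>es. es \<noteq> [] \<and> set es \<subseteq> E1
        \<and> (\<forall>i. Suc i < length es \<longrightarrow> rng (es ! i) = src (es ! Suc i))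
        \<and> src (hd es) = rng (last es))"

text \<open>Every Hilbert space is unitarily equivalent to some l2(X); vectors of l2(X) are
  functions vanishing outside X.\<close>

type_synonym 'i opr = "('i \<Rightarrow> complex) \<Rightarrow> ('i \<Rightarrow> complex)"

definition l2 :: "'i set \<Rightarrow> ('i \<Rightarrow> complex) set" where
  "l2 X = {f. (\<forall>i. i \<notin> X \<longrightarrow> f i = 0) \<and> (\<lambda>i. (cmod (f i))^2) summable_on X}"

definition l2inner :: "'i set \<Rightarrow> ('i \<Rightarrow> complex) \<Rightarrow> ('i \<Rightarrow> complex) \<Rightarrow> complex" where
  "l2inner X f g = (\<Sum>\<^sub>\<infinity>i\<in>X. cnj (f i) * g i)"

definition l2norm :: "'i set \<Rightarrow> ('i \<Rightarrow> complex) \<Rightarrow> real" where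
  "l2norm X f = sqrt (\<Sum>\<^sub>\<infinity>i\<in>X. (cmod (f i))^2)"

definition zero_op :: "'i opr" where
  "zero_op = (\<lambda>f i. 0)"

definition bop :: "'i set \<Rightarrow> 'i opr \<Rightarrow> bool" where
  "bop X T \<longleftrightarrow>
     (\<forall>f\<in>l2 X. T f \<in> l2 X)
   \<and> (\<forall>f\<in>l2 X. \<forall>g\<in>l2 X. \<forall>a b. T (\<lambda>i. a * f i + b * g i) = (\<lambda>i. a * T f i + b * T g i))
   \<and> (\<exists>C. \<forall>f\<in>l2 X. l2norm X (T f) \<le> C * l2norm X f)
   \<and> (\<forall>f. f \<notin> l2 X \<longrightarrow> T f = (\<lambda>i. 0))"

definition adj :: "'i set \<Rightarrow> 'i opr \<Rightarrow> 'i opr" where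
  "adj X T = (THE S. bop X S \<and> (\<forall>f\<in>l2 X. \<forall>g\<in>l2 X. l2inner X (T f) g = l2inner X f (S g)))"

definition is_proj :: "'i set \<Rightarrow> 'i opr \<Rightarrow> bool" where
  "is_proj X P \<longleftrightarrow> bop X P \<and> P \<circ> P = P \<and> adj X P = P"

definition op_le :: "'i set \<Rightarrow> 'i opr \<Rightarrow> 'i opr \<Rightarrow> bool" where
  "op_le X A B \<longleftrightarrow> (\<forall>f\<in>l2 X. Im (l2inner X f (\<lambda>i. B f i - A f i)) = 0 \<and> 0 \<le> Re (l2inner X f (\<lambda>i. B f i - A f i)))"

text \<open>By the universal property of C*(E), *-representations of C*(E) on l2(X) correspond
  bijectively to Cuntz-Krieger E-families (P, S) of operators on l2(X).\<close>
definition ck_family :: "'v set \<Rightarrow> 'e set \<Rightarrow> ('e \<Rightarrow> 'v) \<Rightarrow> ('e \<Rightarrow> 'v) \<Rightarrow>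
     'i set \<Rightarrow> ('v \<Rightarrow> 'i opr) \<Rightarrow> ('e \<Rightarrow> 'i opr) \<Rightarrow> bool" where
  "ck_family E0 E1 rng src X P S \<longleftrightarrow>
     (\<forall>v\<in>E0. is_proj X (P v))
   \<and> (\<forall>v\<in>E0. \<forall>w\<in>E0. v \<noteq> w \<longrightarrow> P v \<circ> P w = zero_op)
   \<and> (\<forall>e\<in>E1. bop X (S e))
   \<and> (\<forall>e\<in>E1. \<forall>e'\<in>E1. e \<noteq> e' \<longrightarrow> (\<forall>f\<in>l2 X. \<forall>g\<in>l2 X. l2inner X (S e f) (S e' g) = 0))
   \<and> (\<forall>e\<in>E1. adj X (S e) \<circ> S e = P (rng e))
   \<and> (\<forall>e\<in>E1. op_le X (S e \<circ> adj X (S e)) (P (src e)))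
   \<and> (\<forall>v\<in>E0. regular_vertex E1 src v \<longrightarrow>
        P v = (\<lambda>f i. \<Sum>e\<in>{e \<in> E1. src e = v}. S e (adj X (S e) f) i))"

definition closed_subspace :: "'i set \<Rightarrow> ('i \<Rightarrow> complex) set \<Rightarrow> bool" where
  "closed_subspace X K \<longleftrightarrow>
     K \<subseteq> l2 X \<and> (\<lambda>i. 0) \<in> K
   \<and> (\<forall>f\<in>K. \<forall>g\<in>K. \<forall>a b. (\<lambda>i. a * f i + b * g i) \<in> K)
   \<and> (\<forall>f\<in>l2 X. (\<forall>\<epsilon>>0. \<exists>g\<in>K. l2norm X (\<lambda>i. f i - g i) < \<epsilon>) \<longrightarrow> f \<in> K)"

definition ck_irreducible :: "'v set \<Rightarrow> 'e set \<Rightarrow> ('e \<Rightarrow> 'v) \<Rightarrow> ('e \<Rightarrow> 'v) \<Rightarrow>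
     'i set \<Rightarrow> ('v \<Rightarrow> 'i opr) \<Rightarrow> ('e \<Rightarrow> 'i opr) \<Rightarrow> bool" where
  "ck_irreducible E0 E1 rng src X P S \<longleftrightarrow>
     ck_family E0 E1 rng src X P S
   \<and> ((\<exists>v\<in>E0. P v \<noteq> zero_op) \<or> (\<exists>e\<in>E1. S e \<noteq> zero_op))
   \<and> (\<forall>K. closed_subspace X K \<and> (\<forall>v\<in>E0. P v ` K \<subseteq> K)
          \<and> (\<forall>e\<in>E1. S e ` K \<subseteq> K \<and> adj X (S e) ` K \<subseteq> K)
        \<longrightarrow> K = {\<lambda>i. 0} \<or> K = l2 X)"

definition unitary_map :: "'i set \<Rightarrow> 'i set \<Rightarrow> (('i \<Rightarrow> complex) \<Rightarrow> ('i \<Rightarrow> complex)) \<Rightarrow> bool" where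
  "unitary_map X Y U \<longleftrightarrow>
     bij_betw U (l2 X) (l2 Y)
   \<and> (\<forall>f\<in>l2 X. \<forall>g\<in>l2 X. \<forall>a b. U (\<lambda>i. a * f i + b * g i) = (\<lambda>i. a * U f i + b * U g i))
   \<and> (\<forall>f\<in>l2 X. \<forall>g\<in>l2 X. l2inner Y (U f) (U g) = l2inner X f g)"

definition unit_equiv :: "'v set \<Rightarrow> 'e set \<Rightarrow>
     ('i set \<times> ('v \<Rightarrow> 'i opr) \<times> ('e \<Rightarrow> 'i opr)) \<Rightarrow>
     ('i set \<times> ('v \<Rightarrow> 'i opr) \<times> ('e \<Rightarrow> 'i opr)) \<Rightarrow> bool" where
  "unit_equiv E0 E1 a b \<longleftrightarrow>
     (case a of (X, P, S) \<Rightarrow> case b of (Y, Q, T) \<Rightarrow>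
       \<exists>U. unitary_map X Y U
         \<and> (\<forall>v\<in>E0. \<forall>f\<in>l2 X. U (P v f) = Q v (U f))
         \<and> (\<forall>e\<in>E1. \<forall>f\<in>l2 X. U (S e f) = T e (U f)))"

text \<open>All irreducible representations of C*(E), realised on l2(X) with X a subset of
  ('v + 'e) list; this index type is large enough to carry every irreducible
  representation of C*(E) up to unitary equivalence.\<close>
definition irreps :: "'v set \<Rightarrow> 'e set \<Rightarrow> ('e \<Rightarrow> 'v) \<Rightarrow> ('e \<Rightarrow> 'v) \<Rightarrow>
     (('v + 'e) list set \<times> ('v \<Rightarrow> ('v + 'e) list opr) \<times> ('e \<Rightarrow> ('v + 'e) list opr)) set" where
  "irreps E0 E1 rng src = {(X, P, S). ck_irreducible E0 E1 rng src X P S}"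

definition irrep_classes where
  "irrep_classes E0 E1 rng src =
     irreps E0 E1 rng src // {(a, b). a \<in> irreps E0 E1 rng src \<and> b \<in> irreps E0 E1 rng src
                                     \<and> unit_equiv E0 E1 a b}"

end

(* Suppose E has a cycle; choose one, \<alpha>, that does not pass through its base vertex v
   before its end (a shortest cycle will do). On l2 of the set of paths ending at v that do not
   end with \<alpha>, let S_e prepend the edge e, except that S_(hd \<alpha>) sends tl \<alpha> to z times
   the empty path, for a fixed z with |z| = 1; together with the projections P_w onto the paths
   starting at w this is a Cuntz-Krieger E-family. It is irreducible: the range projections of
   the words \<alpha>^k cut out cylinders shrinking to the empty path, so every nonzero invariant
   subspace contains the basis vector of the empty path, hence all basis vectors. An
   intertwiner between the families for z and z' preserves the line of the empty path, on
   which S_\<alpha> acts as z and as z' respectively; so z = z', and the unit circle injects into the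
   set of equivalence classes of irreducible representations. *)

theory Submission
  imports Defs "HOL-Library.Sublist"
begin

abbreviation sqmod :: "('i \<Rightarrow> complex) \<Rightarrow> 'i \<Rightarrow> real" where
  "sqmod f \<equiv> \<lambda>i. (cmod (f i))^2"

lemma l2_zero [simp]: "(\<lambda>i. 0) \<in> l2 X"
  by (simp add: l2_def)

lemma l2_zero_outside: "f \<in> l2 X \<Longrightarrow> i \<notin> X \<Longrightarrow> f i = 0"
  by (simp add: l2_def)

lemma l2_summable: "f \<in> l2 X \<Longrightarrow> sqmod f summable_on X"
  by (simp add: l2_def)

lemma l2_lincomb:
  assumes f: "f \<in> l2 X" and g: "g \<in> l2 X"
  shows "(\<lambda>i. a * f i + b * g i) \<in> l2 X"
proof -
  have bound: "sqmod (\<lambda>i. a * f i + b * g i) i \<le> 2 * (cmod a)^2 * sqmod f i + 2 * (cmod b)^2 * sqmod g i"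
    for i
  proof -
    have "cmod (a * f i + b * g i) \<le> cmod a * cmod (f i) + cmod b * cmod (g i)"
      by (metis norm_mult norm_triangle_ineq)
    hence "(cmod (a * f i + b * g i))^2 \<le> (cmod a * cmod (f i) + cmod b * cmod (g i))^2"
      by (simp add: power_mono)
    also have "\<dots> \<le> 2 * (cmod a * cmod (f i))^2 + 2 * (cmod b * cmod (g i))^2"
      using sum_squares_bound[of "cmod a * cmod (f i)" "cmod b * cmod (g i)"] by (simp add: power2_sum)
    finally show ?thesis by (simp add: power_mult_distrib)
  qed
  have "(\<lambda>i. 2 * (cmod a)^2 * sqmod f i + 2 * (cmod b)^2 * sqmod g i) summable_on X"
    using l2_summable[OF f] l2_summable[OF g] by (intro summable_on_add summable_on_cmult_right)
  hence "sqmod (\<lambda>i. a * f i + b * g i) summable_on X"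
    by (rule summable_on_comparison_test) (use bound in auto)
  thus ?thesis using f g by (auto simp: l2_def)
qed

lemma l2_diff: "f \<in> l2 X \<Longrightarrow> g \<in> l2 X \<Longrightarrow> (\<lambda>i. f i - g i) \<in> l2 X"
  using l2_lincomb[of f X g 1 "-1"] by simp

lemma l2_scale: "f \<in> l2 X \<Longrightarrow> (\<lambda>i. a * f i) \<in> l2 X"
  using l2_lincomb[of f X f a 0] by simp

lemma l2inner_summable:
  assumes f: "f \<in> l2 X" and g: "g \<in> l2 X"
  shows "(\<lambda>i. cnj (f i) * g i) summable_on X"
proof -
  have "norm (cnj (f i) * g i) \<le> sqmod f i + sqmod g i" for i
    using sum_squares_bound[of "cmod (f i)" "cmod (g i)"]
        mult_nonneg_nonneg[OF norm_ge_zero norm_ge_zero, of "f i" "g i"]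
    unfolding norm_mult complex_mod_cnj by linarith
  hence "(\<lambda>i. norm (cnj (f i) * g i)) summable_on X"
    by (intro summable_on_comparison_test[OF summable_on_add[OF l2_summable[OF f] l2_summable[OF g]]]) auto
  thus ?thesis by (rule abs_summable_summable)
qed

lemma infsum_complex_of_real: "(\<Sum>\<^sub>\<infinity>i\<in>X. complex_of_real (h i)) = of_real (\<Sum>\<^sub>\<infinity>i\<in>X. h i)"
proof (rule infsum_bounded_linear_strong[OF _ bounded_linear_of_real])
  show "(\<lambda>x. complex_of_real (h x)) summable_on X \<longleftrightarrow> h summable_on X"
    using summable_on_Re[of "\<lambda>x. complex_of_real (h x)"] summable_on_of_real[of h] by auto
qed

lemma cnj_mult_self: "cnj z * z = complex_of_real ((cmod z)^2)"
  by (metis complex_norm_square mult.commute of_real_power)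

lemma l2inner_self: "l2inner X f f = of_real (\<Sum>\<^sub>\<infinity>i\<in>X. sqmod f i)"
  unfolding l2inner_def cnj_mult_self by (rule infsum_complex_of_real)

lemma l2inner_diff_right:
  assumes "h \<in> l2 X" "f \<in> l2 X" "g \<in> l2 X"
  shows "l2inner X h (\<lambda>i. f i - g i) = l2inner X h f - l2inner X h g"
proof -
  have "l2inner X h (\<lambda>i. f i - g i) = (\<Sum>\<^sub>\<infinity>i\<in>X. cnj (h i) * f i + - (cnj (h i) * g i))"
    unfolding l2inner_def by (simp add: algebra_simps)
  also have "\<dots> = l2inner X h f + (\<Sum>\<^sub>\<infinity>i\<in>X. - (cnj (h i) * g i))"
    unfolding l2inner_def using assms
    by (intro infsum_add l2inner_summable summable_on_uminus[THEN iffD2])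
  finally show ?thesis by (simp add: infsum_uminus l2inner_def)
qed

lemma l2inner_self_eq_0D:
  assumes f: "f \<in> l2 X" and f0: "l2inner X f f = 0"
  shows "f = (\<lambda>i. 0)"
proof
  fix i
  have "(\<Sum>\<^sub>\<infinity>i\<in>X. sqmod f i) = 0" using f0 by (simp add: l2inner_self)
  hence "i \<in> X \<Longrightarrow> sqmod f i = 0"
    by (intro nonneg_infsum_le_0D[OF _ l2_summable[OF f]]) auto
  thus "f i = 0" using l2_zero_outside[OF f] by (cases "i \<in> X") auto
qed

lemma l2_eqI:
  assumes f: "f \<in> l2 X" and g: "g \<in> l2 X"
    and eq: "\<And>h. h \<in> l2 X \<Longrightarrow> l2inner X h f = l2inner X h g"
  shows "f = g"
proof -
  have d: "(\<lambda>i. f i - g i) \<in> l2 X" using f g by (rule l2_diff)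
  have "l2inner X (\<lambda>i. f i - g i) (\<lambda>i. f i - g i) = 0"
    using l2inner_diff_right[OF d f g] eq[OF d] by simp
  from l2inner_self_eq_0D[OF d this] show ?thesis by (simp add: fun_eq_iff)
qed

abbreviation basis_vec :: "'i \<Rightarrow> 'i \<Rightarrow> complex" where
  "basis_vec \<mu> \<equiv> indicator {\<mu>}"

lemma basis_vec_l2: "\<mu> \<in> X \<Longrightarrow> basis_vec \<mu> \<in> l2 X"
proof -
  assume \<mu>: "\<mu> \<in> X"
  have "finite {i \<in> X. sqmod (basis_vec \<mu>) i \<noteq> 0}"
    by (rule finite_subset[of _ "{\<mu>}"]) (auto split: split_indicator)
  hence "sqmod (basis_vec \<mu>) summable_on X"
    by (rule finite_nonzero_values_imp_summable_on)
  thus ?thesis using \<mu> by (auto simp: l2_def split: split_indicator)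
qed

lemma bop_l2: "bop X T \<Longrightarrow> f \<in> l2 X \<Longrightarrow> T f \<in> l2 X"
  by (simp add: bop_def)

lemma bop_outside_l2: "bop X T \<Longrightarrow> f \<notin> l2 X \<Longrightarrow> T f = (\<lambda>i. 0)"
  by (simp add: bop_def)

lemma bop_lincomb:
  "bop X T \<Longrightarrow> f \<in> l2 X \<Longrightarrow> g \<in> l2 X \<Longrightarrow> T (\<lambda>i. a * f i + b * g i) = (\<lambda>i. a * T f i + b * T g i)"
  by (simp add: bop_def)

lemma bop_scale: "bop X T \<Longrightarrow> f \<in> l2 X \<Longrightarrow> T (\<lambda>i. a * f i) = (\<lambda>i. a * T f i)"
  using bop_lincomb[of X T f f a 0] by simp

lemma adj_eqI:
  assumes T: "bop X T" and S: "bop X S"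
    and adjoint: "\<And>f g. f \<in> l2 X \<Longrightarrow> g \<in> l2 X \<Longrightarrow> l2inner X (T f) g = l2inner X f (S g)"
  shows "adj X T = S"
  unfolding adj_def
proof (rule the_equality)
  show "bop X S \<and> (\<forall>f\<in>l2 X. \<forall>g\<in>l2 X. l2inner X (T f) g = l2inner X f (S g))"
    using S adjoint by blast
next
  fix S' assume S': "bop X S' \<and> (\<forall>f\<in>l2 X. \<forall>g\<in>l2 X. l2inner X (T f) g = l2inner X f (S' g))"
  show "S' = S"
  proof
    fix g
    show "S' g = S g"
    proof (cases "g \<in> l2 X")
      case True
      show ?thesis
        by (rule l2_eqI[OF bop_l2[OF _ True] bop_l2[OF S True]]) (use S' adjoint True in auto)
    next
      case False
      thus ?thesis using S S' bop_outside_l2[of X S' g] bop_outside_l2[of X S g] by simp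
    qed
  qed
qed

text \<open>Since \<^const>\<open>adj\<close> is a definite description, the adjoint identity has to be
  established for each operator separately.\<close>

definition has_adjoint :: "'i set \<Rightarrow> 'i opr \<Rightarrow> bool" where
  "has_adjoint X T \<longleftrightarrow> bop X T \<and> bop X (adj X T)
     \<and> (\<forall>f\<in>l2 X. \<forall>g\<in>l2 X. l2inner X (T f) g = l2inner X f (adj X T g))"

lemma has_adjointI:
  assumes "bop X T" "bop X S"
    and "\<And>f g. f \<in> l2 X \<Longrightarrow> g \<in> l2 X \<Longrightarrow> l2inner X (T f) g = l2inner X f (S g)"
  shows "has_adjoint X T"
  using assms adj_eqI[OF assms] by (simp add: has_adjoint_def)

subsection \<open>Weighted composition operators\<close>

definition wcomp :: "'i set \<Rightarrow> 'i set \<Rightarrow> ('i \<Rightarrow> 'i) \<Rightarrow> ('i \<Rightarrow> complex) \<Rightarrow> 'i opr" where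
  "wcomp X R g c =
     (\<lambda>f. if f \<in> l2 X then (\<lambda>\<nu>. if \<nu> \<in> R then c \<nu> * f (g \<nu>) else 0) else (\<lambda>i. 0))"

text \<open>An admissible weighted composition operator is a partial isometry with initial space
  l2(g ` R) and final space l2(R).\<close>

definition wcomp_admissible :: "'i set \<Rightarrow> 'i set \<Rightarrow> ('i \<Rightarrow> 'i) \<Rightarrow> ('i \<Rightarrow> complex) \<Rightarrow> bool" where
  "wcomp_admissible X R g c \<longleftrightarrow> R \<subseteq> X \<and> inj_on g R \<and> g ` R \<subseteq> X \<and> (\<forall>\<nu>\<in>R. cmod (c \<nu>) = 1)"

definition wcomp_adj :: "'i set \<Rightarrow> 'i set \<Rightarrow> ('i \<Rightarrow> 'i) \<Rightarrow> ('i \<Rightarrow> complex) \<Rightarrow> 'i opr" where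
  "wcomp_adj X R g c = wcomp X (g ` R) (inv_into R g) (\<lambda>\<mu>. cnj (c (inv_into R g \<mu>)))"

abbreviation indic_op :: "'i set \<Rightarrow> 'i set \<Rightarrow> 'i opr" where
  "indic_op X C \<equiv> wcomp X C id (\<lambda>_. 1)"

lemma indic_op_admissible: "C \<subseteq> X \<Longrightarrow> wcomp_admissible X C id (\<lambda>_. 1)"
  by (auto simp: wcomp_admissible_def)

lemma wcomp_apply: "f \<in> l2 X \<Longrightarrow> wcomp X R g c f \<nu> = (if \<nu> \<in> R then c \<nu> * f (g \<nu>) else 0)"
  by (simp add: wcomp_def)

lemma wcomp_outside_l2: "f \<notin> l2 X \<Longrightarrow> wcomp X R g c f = (\<lambda>i. 0)"
  by (simp add: wcomp_def)

lemma wcomp_outside: "\<nu> \<notin> R \<Longrightarrow> wcomp X R g c f \<nu> = 0"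
  by (simp add: wcomp_def)

lemma wcomp_zero [simp]: "wcomp X R g c (\<lambda>i. 0) = (\<lambda>i. 0)"
  by (simp add: wcomp_def fun_eq_iff)

lemma indic_op_id: "f \<in> l2 X \<Longrightarrow> indic_op X X f = f"
  by (auto simp: wcomp_apply l2_zero_outside)

lemma has_sum_sqmod_wcomp:
  assumes w: "wcomp_admissible X R g c" and f: "f \<in> l2 X"
  shows "(sqmod (wcomp X R g c f) has_sum (\<Sum>\<^sub>\<infinity>i\<in>g ` R. sqmod f i)) X"
proof -
  have RX: "R \<subseteq> X" and inj: "inj_on g R" and gR: "g ` R \<subseteq> X"
    and c: "\<And>\<nu>. \<nu> \<in> R \<Longrightarrow> cmod (c \<nu>) = 1"
    using w by (auto simp: wcomp_admissible_def)
  have "(sqmod f has_sum (\<Sum>\<^sub>\<infinity>i\<in>g ` R. sqmod f i)) (g ` R)"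
    using summable_on_subset_banach[OF l2_summable[OF f] gR] by (rule has_sum_infsum)
  hence "((\<lambda>\<nu>. sqmod f (g \<nu>)) has_sum (\<Sum>\<^sub>\<infinity>i\<in>g ` R. sqmod f i)) R"
    using has_sum_reindex[OF inj, of "sqmod f"] by (simp add: comp_def)
  thus ?thesis
    by (rule has_sum_cong_neutral[THEN iffD2, rotated -1])
       (use RX f c in \<open>auto simp: wcomp_apply norm_mult\<close>)
qed

lemma wcomp_l2:
  assumes w: "wcomp_admissible X R g c" and f: "f \<in> l2 X"
  shows "wcomp X R g c f \<in> l2 X"
proof -
  have "R \<subseteq> X" using w by (simp add: wcomp_admissible_def)
  thus ?thesis
    using has_sum_imp_summable[OF has_sum_sqmod_wcomp[OF w f]] by (auto simp: l2_def intro!: wcomp_outside)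
qed

lemma wcomp_norm_le:
  assumes w: "wcomp_admissible X R g c" and f: "f \<in> l2 X"
  shows "l2norm X (wcomp X R g c f) \<le> 1 * l2norm X f"
proof -
  have gR: "g ` R \<subseteq> X" using w by (auto simp: wcomp_admissible_def)
  have "(\<Sum>\<^sub>\<infinity>i\<in>g ` R. sqmod f i) \<le> (\<Sum>\<^sub>\<infinity>i\<in>X. sqmod f i)"
    by (rule infsum_mono_neutral[OF summable_on_subset_banach[OF l2_summable[OF f] gR] l2_summable[OF f]])
       (use gR in auto)
  thus ?thesis
    unfolding l2norm_def infsumI[OF has_sum_sqmod_wcomp[OF w f]] by simp
qed

lemma wcomp_lincomb:
  assumes "f \<in> l2 X" and "h \<in> l2 X"
  shows "wcomp X R g c (\<lambda>i. a * f i + b * h i) = (\<lambda>i. a * wcomp X R g c f i + b * wcomp X R g c h i)"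
  using l2_lincomb[OF assms, of a b] assms by (auto simp: wcomp_apply algebra_simps)

lemma wcomp_bop:
  assumes w: "wcomp_admissible X R g c"
  shows "bop X (wcomp X R g c)"
  unfolding bop_def using wcomp_l2[OF w] wcomp_lincomb wcomp_norm_le[OF w] wcomp_outside_l2 by blast

lemma wcomp_adj_admissible:
  assumes w: "wcomp_admissible X R g c"
  shows "wcomp_admissible X (g ` R) (inv_into R g) (\<lambda>\<mu>. cnj (c (inv_into R g \<mu>)))"
proof -
  have inj: "inj_on g R" using w by (simp add: wcomp_admissible_def)
  have "inv_into R g ` g ` R = R" using inj by (rule inv_into_image_cancel) simp
  moreover have "inj_on (inv_into R g) (g ` R)" by (rule inj_on_inv_into) simp
  ultimately show ?thesis using w inj by (auto simp: wcomp_admissible_def)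
qed

lemma wcomp_adj_bop: "wcomp_admissible X R g c \<Longrightarrow> bop X (wcomp_adj X R g c)"
  unfolding wcomp_adj_def by (intro wcomp_bop wcomp_adj_admissible)

lemma wcomp_adj_apply:
  assumes w: "wcomp_admissible X R g c" and f: "f \<in> l2 X" and \<nu>: "\<nu> \<in> R"
  shows "wcomp_adj X R g c f (g \<nu>) = cnj (c \<nu>) * f \<nu>"
  using w f \<nu> by (simp add: wcomp_adj_def wcomp_apply wcomp_admissible_def)

lemma wcomp_adj_outside: "\<mu> \<notin> g ` R \<Longrightarrow> wcomp_adj X R g c f \<mu> = 0"
  by (simp add: wcomp_adj_def wcomp_outside)

lemma wcomp_adj_outside_l2: "f \<notin> l2 X \<Longrightarrow> wcomp_adj X R g c f = (\<lambda>i. 0)"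
  by (simp add: wcomp_adj_def wcomp_outside_l2)

lemma wcomp_adj_zero [simp]: "wcomp_adj X R g c (\<lambda>i. 0) = (\<lambda>i. 0)"
  by (simp add: wcomp_adj_def)

lemma l2inner_wcomp:
  assumes w: "wcomp_admissible X R g c" and f: "f \<in> l2 X" and h: "h \<in> l2 X"
  shows "l2inner X (wcomp X R g c f) h = l2inner X f (wcomp_adj X R g c h)"
proof -
  have RX: "R \<subseteq> X" and inj: "inj_on g R" and gR: "g ` R \<subseteq> X"
    using w by (auto simp: wcomp_admissible_def)
  have "l2inner X (wcomp X R g c f) h = (\<Sum>\<^sub>\<infinity>\<nu>\<in>R. cnj (c \<nu>) * cnj (f (g \<nu>)) * h \<nu>)"
    unfolding l2inner_def by (rule infsum_cong_neutral) (use RX f in \<open>auto simp: wcomp_apply\<close>)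
  also have "\<dots> = (\<Sum>\<^sub>\<infinity>\<nu>\<in>R. cnj (f (g \<nu>)) * wcomp_adj X R g c h (g \<nu>))"
    by (rule infsum_cong) (simp add: wcomp_adj_apply[OF w h])
  also have "\<dots> = (\<Sum>\<^sub>\<infinity>\<mu>\<in>g ` R. cnj (f \<mu>) * wcomp_adj X R g c h \<mu>)"
    using infsum_reindex[OF inj, of "\<lambda>\<mu>. cnj (f \<mu>) * wcomp_adj X R g c h \<mu>"] by (simp add: comp_def)
  also have "\<dots> = l2inner X f (wcomp_adj X R g c h)"
    unfolding l2inner_def by (rule infsum_cong_neutral) (use gR in \<open>auto simp: wcomp_adj_outside\<close>)
  finally show ?thesis .
qed

lemma adj_wcomp: "wcomp_admissible X R g c \<Longrightarrow> adj X (wcomp X R g c) = wcomp_adj X R g c"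
  by (intro adj_eqI wcomp_bop wcomp_adj_bop l2inner_wcomp)

lemma wcomp_has_adjoint:
  assumes w: "wcomp_admissible X R g c"
  shows "has_adjoint X (wcomp X R g c)"
  by (rule has_adjointI[OF wcomp_bop[OF w] wcomp_adj_bop[OF w] l2inner_wcomp[OF w]])

lemma wcomp_comp_adj:
  assumes w: "wcomp_admissible X R g c"
  shows "wcomp X R g c \<circ> wcomp_adj X R g c = indic_op X R"
proof
  fix f
  show "(wcomp X R g c \<circ> wcomp_adj X R g c) f = indic_op X R f"
  proof (cases "f \<in> l2 X")
    case True
    have "\<And>\<nu>. \<nu> \<in> R \<Longrightarrow> c \<nu> * cnj (c \<nu>) = 1"
      using w by (auto simp: wcomp_admissible_def complex_norm_square[symmetric])
    thus ?thesis using True bop_l2[OF wcomp_adj_bop[OF w] True]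
      by (auto simp: wcomp_apply wcomp_adj_apply[OF w True] mult.assoc[symmetric])
  qed (simp add: wcomp_adj_outside_l2 wcomp_outside_l2)
qed

lemma wcomp_adj_comp:
  assumes w: "wcomp_admissible X R g c"
  shows "wcomp_adj X R g c \<circ> wcomp X R g c = indic_op X (g ` R)"
proof (intro ext)
  fix f \<mu>
  show "(wcomp_adj X R g c \<circ> wcomp X R g c) f \<mu> = indic_op X (g ` R) f \<mu>"
  proof (cases "f \<in> l2 X \<and> \<mu> \<in> g ` R")
    case True
    then obtain \<nu> where \<nu>: "\<nu> \<in> R" "\<mu> = g \<nu>" by auto
    have "cnj (c \<nu>) * c \<nu> = 1"
      using w \<nu> by (auto simp: wcomp_admissible_def cnj_mult_self)
    thus ?thesis using True \<nu> wcomp_l2[OF w]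
      by (simp add: wcomp_adj_apply[OF w] wcomp_apply mult.assoc[symmetric])
  qed (auto simp: wcomp_adj_outside wcomp_outside wcomp_outside_l2 wcomp_adj_outside_l2)
qed

lemma wcomp_indic_op_adj:
  assumes w: "wcomp_admissible X R g c" and C: "C \<subseteq> X"
  shows "wcomp X R g c \<circ> indic_op X C \<circ> wcomp_adj X R g c = indic_op X {\<nu>\<in>R. g \<nu> \<in> C}"
proof
  fix f
  show "(wcomp X R g c \<circ> indic_op X C \<circ> wcomp_adj X R g c) f = indic_op X {\<nu>\<in>R. g \<nu> \<in> C} f"
  proof (cases "f \<in> l2 X")
    case True
    have "\<And>\<nu>. \<nu> \<in> R \<Longrightarrow> c \<nu> * cnj (c \<nu>) = 1"
      using w by (auto simp: wcomp_admissible_def complex_norm_square[symmetric])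
    moreover have "wcomp_adj X R g c f \<in> l2 X" using wcomp_adj_bop[OF w] True by (rule bop_l2)
    ultimately show ?thesis using True wcomp_l2[OF indic_op_admissible[OF C]]
      by (auto simp: wcomp_apply wcomp_adj_apply[OF w True] mult.assoc[symmetric])
  qed (simp add: wcomp_adj_outside_l2 wcomp_outside_l2)
qed

lemma indic_op_comp:
  assumes "C' \<subseteq> X"
  shows "indic_op X C \<circ> indic_op X C' = indic_op X (C \<inter> C')"
proof
  fix f
  show "(indic_op X C \<circ> indic_op X C') f = indic_op X (C \<inter> C') f"
    using wcomp_l2[OF indic_op_admissible[OF assms], of f]
    by (cases "f \<in> l2 X") (auto simp: wcomp_apply wcomp_outside_l2)
qed

lemma adj_indic_op: "C \<subseteq> X \<Longrightarrow> adj X (indic_op X C) = indic_op X C"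
  by (intro adj_eqI wcomp_bop indic_op_admissible)
     (auto simp: l2inner_def wcomp_apply intro: infsum_cong)

lemma op_le_indic_op:
  assumes "C \<subseteq> C'" "C' \<subseteq> X"
  shows "op_le X (indic_op X C) (indic_op X C')"
  unfolding op_le_def
proof
  fix f assume f: "f \<in> l2 X"
  have "l2inner X f (\<lambda>i. indic_op X C' f i - indic_op X C f i)
      = of_real (\<Sum>\<^sub>\<infinity>i\<in>X. if i \<in> C' - C then sqmod f i else 0)"
    unfolding l2inner_def infsum_complex_of_real[symmetric]
    by (intro infsum_cong) (use f assms in \<open>auto simp: wcomp_apply cnj_mult_self\<close>)
  moreover have "0 \<le> (\<Sum>\<^sub>\<infinity>i\<in>X. if i \<in> C' - C then sqmod f i else 0)"
    by (rule infsum_nonneg) simp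
  ultimately show "Im (l2inner X f (\<lambda>i. indic_op X C' f i - indic_op X C f i)) = 0
      \<and> 0 \<le> Re (l2inner X f (\<lambda>i. indic_op X C' f i - indic_op X C f i))"
    by simp
qed

lemma wcomp_basis_vec:
  assumes w: "wcomp_admissible X R g c" and \<nu>: "\<nu> \<in> R"
  shows "wcomp X R g c (basis_vec (g \<nu>)) = (\<lambda>\<nu>'. c \<nu> * basis_vec \<nu> \<nu>')"
proof
  fix \<nu>'
  have inj: "inj_on g R" and gR: "g \<nu> \<in> X" using w \<nu> by (auto simp: wcomp_admissible_def)
  show "wcomp X R g c (basis_vec (g \<nu>)) \<nu>' = c \<nu> * basis_vec \<nu> \<nu>'"
    using inj_onD[OF inj, of \<nu>' \<nu>] \<nu> basis_vec_l2[OF gR]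
    by (auto simp: wcomp_apply split: split_indicator)
qed

lemma closed_subspace_l2: "closed_subspace X K \<Longrightarrow> f \<in> K \<Longrightarrow> f \<in> l2 X"
  unfolding closed_subspace_def by blast

lemma closed_subspace_zero: "closed_subspace X K \<Longrightarrow> (\<lambda>i. 0) \<in> K"
  unfolding closed_subspace_def by blast

lemma closed_subspace_lincomb:
  "closed_subspace X K \<Longrightarrow> f \<in> K \<Longrightarrow> g \<in> K \<Longrightarrow> (\<lambda>i. a * f i + b * g i) \<in> K"
  unfolding closed_subspace_def by blast

lemma closed_subspace_scale: "closed_subspace X K \<Longrightarrow> f \<in> K \<Longrightarrow> (\<lambda>i. a * f i) \<in> K"
  using closed_subspace_lincomb[of X K f f a 0] by simp

lemma l2_small_tail:
  assumes f: "f \<in> l2 X" and \<epsilon>: "\<epsilon> > 0"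
  obtains F where "finite F" "F \<subseteq> X" "(\<Sum>\<^sub>\<infinity>i\<in>X - F. sqmod f i) < \<epsilon>"
proof -
  obtain F where F: "finite F" "F \<subseteq> X" "dist (sum (sqmod f) F) (\<Sum>\<^sub>\<infinity>i\<in>X. sqmod f i) \<le> \<epsilon>/2"
    using infsum_finite_approximation[OF l2_summable[OF f], of "\<epsilon>/2"] \<epsilon> by auto
  have "(\<Sum>\<^sub>\<infinity>i\<in>X - F. sqmod f i) = (\<Sum>\<^sub>\<infinity>i\<in>X. sqmod f i) - sum (sqmod f) F"
    using infsum_Diff[OF l2_summable[OF f] _ F(2)] F(1) by simp
  hence "(\<Sum>\<^sub>\<infinity>i\<in>X - F. sqmod f i) \<le> \<epsilon>/2"
    using F(3) unfolding dist_real_def by arith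
  thus ?thesis using that F \<epsilon> by simp
qed

lemma closed_subspace_memI:
  assumes K: "closed_subspace X K" and f: "f \<in> l2 X" and h: "h \<in> l2 X"
    and approx: "\<And>F. finite F \<Longrightarrow> F \<subseteq> X \<Longrightarrow>
      \<exists>g\<in>K. (\<forall>i\<in>F. g i = f i) \<and> (\<forall>i\<in>X. cmod (f i - g i) \<le> cmod (h i))"
  shows "f \<in> K"
proof -
  have "\<exists>g\<in>K. l2norm X (\<lambda>i. f i - g i) < \<epsilon>" if \<epsilon>: "\<epsilon> > 0" for \<epsilon>
  proof -
    obtain F where F: "finite F" "F \<subseteq> X" "(\<Sum>\<^sub>\<infinity>i\<in>X - F. sqmod h i) < \<epsilon>^2"
      using l2_small_tail[OF h, of "\<epsilon>^2"] \<epsilon> by auto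
    then obtain g where g: "g \<in> K" "\<forall>i\<in>F. g i = f i" "\<forall>i\<in>X. cmod (f i - g i) \<le> cmod (h i)"
      using approx by blast
    have d: "(\<lambda>i. f i - g i) \<in> l2 X" using l2_diff[OF f closed_subspace_l2[OF K g(1)]] .
    have "(\<Sum>\<^sub>\<infinity>i\<in>X. sqmod (\<lambda>i. f i - g i) i) \<le> (\<Sum>\<^sub>\<infinity>i\<in>X - F. sqmod h i)"
      by (rule infsum_mono_neutral[OF l2_summable[OF d] summable_on_subset_banach[OF l2_summable[OF h]]])
         (use g in \<open>auto intro: power_mono\<close>)
    hence "l2norm X (\<lambda>i. f i - g i) \<le> sqrt (\<Sum>\<^sub>\<infinity>i\<in>X - F. sqmod h i)"
      unfolding l2norm_def by (rule real_sqrt_le_mono)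
    also have "\<dots> < sqrt (\<epsilon>^2)" using F(3) by (rule real_sqrt_less_mono)
    also have "\<dots> = \<epsilon>" using \<epsilon> by simp
    finally show ?thesis using g(1) by blast
  qed
  thus ?thesis using K f unfolding closed_subspace_def by blast
qed

lemma closed_subspace_eq_l2:
  assumes K: "closed_subspace X K" and basis: "\<And>\<mu>. \<mu> \<in> X \<Longrightarrow> basis_vec \<mu> \<in> K"
  shows "K = l2 X"
proof
  show "K \<subseteq> l2 X" using K closed_subspace_l2 by blast
next
  have restrict: "(\<lambda>i. if i \<in> F then f i else 0) \<in> K" if "finite F" "F \<subseteq> X" for f F
    using that
  proof (induction F rule: finite_induct)
    case (insert \<mu> F)
    hence "(\<lambda>i. 1 * (if i \<in> F then f i else 0) + f \<mu> * basis_vec \<mu> i) \<in> K"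
      by (intro closed_subspace_lincomb[OF K] basis) auto
    also have "(\<lambda>i. 1 * (if i \<in> F then f i else 0) + f \<mu> * basis_vec \<mu> i)
        = (\<lambda>i. if i \<in> insert \<mu> F then f i else 0)"
      using insert by (auto simp: fun_eq_iff split: split_indicator)
    finally show ?case .
  qed (use closed_subspace_zero[OF K] in simp)
  show "l2 X \<subseteq> K"
  proof
    fix f assume f: "f \<in> l2 X"
    show "f \<in> K"
    proof (rule closed_subspace_memI[OF K f f])
      fix F assume "finite F" "F \<subseteq> X"
      thus "\<exists>g\<in>K. (\<forall>i\<in>F. g i = f i) \<and> (\<forall>i\<in>X. cmod (f i - g i) \<le> cmod (f i))"
        by (intro bexI[OF _ restrict]) auto
    qed
  qed
qed

lemma unitary_map_l2: "unitary_map X Y U \<Longrightarrow> f \<in> l2 X \<Longrightarrow> U f \<in> l2 Y"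
  unfolding unitary_map_def bij_betw_def by blast

lemma unitary_map_inner:
  "unitary_map X Y U \<Longrightarrow> f \<in> l2 X \<Longrightarrow> g \<in> l2 X \<Longrightarrow> l2inner Y (U f) (U g) = l2inner X f g"
  unfolding unitary_map_def by blast

lemma unitary_map_scale:
  assumes "unitary_map X Y U" "f \<in> l2 X"
  shows "U (\<lambda>i. a * f i) = (\<lambda>i. a * U f i)"
proof -
  have "U (\<lambda>i. a * f i + 0 * f i) = (\<lambda>i. a * U f i + 0 * U f i)"
    using assms unfolding unitary_map_def by blast
  thus ?thesis by simp
qed

lemma unitary_map_intertwines_adj:
  assumes U: "unitary_map X Y U" and A: "has_adjoint X A" and A': "has_adjoint Y A'"
    and intertw: "\<And>f. f \<in> l2 X \<Longrightarrow> U (A f) = A' (U f)"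
    and f: "f \<in> l2 X"
  shows "U (adj X A f) = adj Y A' (U f)"
proof (rule l2_eqI)
  show "U (adj X A f) \<in> l2 Y"
    using A f by (intro unitary_map_l2[OF U]) (simp add: has_adjoint_def bop_l2)
  show "adj Y A' (U f) \<in> l2 Y"
    using A' unitary_map_l2[OF U f] by (simp add: has_adjoint_def bop_l2)
next
  fix h assume "h \<in> l2 Y"
  then obtain h0 where h0: "h0 \<in> l2 X" "h = U h0"
    using U unfolding unitary_map_def bij_betw_def by blast
  have Ah0: "A h0 \<in> l2 X" and adjf: "adj X A f \<in> l2 X"
    using A h0 f by (simp_all add: has_adjoint_def bop_l2)
  have "l2inner Y h (U (adj X A f)) = l2inner X (A h0) f"
    using unitary_map_inner[OF U h0(1) adjf] A h0 f by (simp add: has_adjoint_def)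
  also have "\<dots> = l2inner Y (A' h) (U f)"
    using unitary_map_inner[OF U Ah0 f] intertw[OF h0(1)] h0(2) by simp
  also have "\<dots> = l2inner Y h (adj Y A' (U f))"
    using A' \<open>h \<in> l2 Y\<close> unitary_map_l2[OF U f] by (simp add: has_adjoint_def)
  finally show "l2inner Y h (U (adj X A f)) = l2inner Y h (adj Y A' (U f))" .
qed

primrec word_op :: "'i set \<Rightarrow> ('e \<Rightarrow> 'i opr) \<Rightarrow> 'e list \<Rightarrow> 'i opr" where
  "word_op X S [] = indic_op X X"
| "word_op X S (e # w) = S e \<circ> word_op X S w"

primrec word_adj :: "'i set \<Rightarrow> ('e \<Rightarrow> 'i opr) \<Rightarrow> 'e list \<Rightarrow> 'i opr" where
  "word_adj X S [] = indic_op X X"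
| "word_adj X S (e # w) = word_adj X S w \<circ> adj X (S e)"

lemma word_op_mem_invariant:
  assumes K: "closed_subspace X K" and inv: "\<And>e. e \<in> E \<Longrightarrow> S e ` K \<subseteq> K"
  shows "set w \<subseteq> E \<Longrightarrow> f \<in> K \<Longrightarrow> word_op X S w f \<in> K"
proof (induction w arbitrary: f)
  case Nil thus ?case using indic_op_id[OF closed_subspace_l2[OF K Nil.prems(2)]] by simp
qed (use inv in auto)

lemma word_adj_mem_invariant:
  assumes K: "closed_subspace X K" and inv: "\<And>e. e \<in> E \<Longrightarrow> adj X (S e) ` K \<subseteq> K"
  shows "set w \<subseteq> E \<Longrightarrow> f \<in> K \<Longrightarrow> word_adj X S w f \<in> K"
proof (induction w arbitrary: f)
  case Nil thus ?case using indic_op_id[OF closed_subspace_l2[OF K Nil.prems(2)]] by simp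
qed (use inv in auto)

lemma word_op_l2:
  assumes "\<And>e. e \<in> E \<Longrightarrow> bop X (S e)"
  shows "set w \<subseteq> E \<Longrightarrow> f \<in> l2 X \<Longrightarrow> word_op X S w f \<in> l2 X"
proof (induction w arbitrary: f)
  case Nil thus ?case by (simp add: indic_op_id)
next
  case (Cons e w) thus ?case using bop_l2[OF assms[of e]] by simp
qed

lemma word_adj_l2:
  assumes "\<And>e. e \<in> E \<Longrightarrow> has_adjoint X (S e)"
  shows "set w \<subseteq> E \<Longrightarrow> f \<in> l2 X \<Longrightarrow> word_adj X S w f \<in> l2 X"
proof (induction w arbitrary: f)
  case Nil thus ?case by (simp add: indic_op_id)
qed (use assms in \<open>auto simp: has_adjoint_def bop_l2\<close>)

lemma word_op_scale:
  assumes "\<And>e. e \<in> E \<Longrightarrow> bop X (S e)"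
  shows "set w \<subseteq> E \<Longrightarrow> f \<in> l2 X \<Longrightarrow> word_op X S w (\<lambda>i. a * f i) = (\<lambda>i. a * word_op X S w f i)"
proof (induction w)
  case Nil thus ?case by (simp add: l2_scale indic_op_id)
next
  case (Cons e w)
  thus ?case using bop_scale[OF assms[of e] word_op_l2[OF assms, where w=w and f=f]] by simp
qed

context
  fixes X Y U E and S S' :: "'e \<Rightarrow> 'i opr"
  assumes U: "unitary_map X Y U"
    and S: "\<And>e. e \<in> E \<Longrightarrow> has_adjoint X (S e)" and S': "\<And>e. e \<in> E \<Longrightarrow> has_adjoint Y (S' e)"
    and intertw: "\<And>e f. e \<in> E \<Longrightarrow> f \<in> l2 X \<Longrightarrow> U (S e f) = S' e (U f)"
begin

lemma unitary_map_intertwines_word_op: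
  "set w \<subseteq> E \<Longrightarrow> f \<in> l2 X \<Longrightarrow> U (word_op X S w f) = word_op Y S' w (U f)"
proof (induction w)
  case Nil thus ?case by (simp add: indic_op_id unitary_map_l2[OF U])
next
  case (Cons e w)
  have "word_op X S w f \<in> l2 X"
    using Cons.prems S by (intro word_op_l2[of E]) (auto simp: has_adjoint_def)
  thus ?case using Cons intertw by simp
qed

lemma unitary_map_intertwines_word_adj:
  "set w \<subseteq> E \<Longrightarrow> f \<in> l2 X \<Longrightarrow> U (word_adj X S w f) = word_adj Y S' w (U f)"
proof (induction w arbitrary: f)
  case Nil thus ?case by (simp add: indic_op_id unitary_map_l2[OF U])
next
  case (Cons e w)
  have e: "e \<in> E" and w: "set w \<subseteq> E" using Cons.prems by auto
  have "adj X (S e) f \<in> l2 X" using S[OF e] Cons.prems(2) by (simp add: has_adjoint_def bop_l2)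
  moreover have "U (adj X (S e) f) = adj Y (S' e) (U f)"
    using unitary_map_intertwines_adj[OF U S[OF e] S'[OF e] intertw[OF e] Cons.prems(2)] .
  ultimately show ?case using Cons.IH[OF w] by simp
qed

end

definition is_path :: "('e \<Rightarrow> 'v) \<Rightarrow> ('e \<Rightarrow> 'v) \<Rightarrow> 'e list \<Rightarrow> bool" where
  "is_path rng src es \<longleftrightarrow> (\<forall>i. Suc i < length es \<longrightarrow> rng (es ! i) = src (es ! Suc i))"

lemma is_path_Cons: "is_path rng src (e # \<mu>) \<longleftrightarrow> (\<mu> \<noteq> [] \<longrightarrow> rng e = src (hd \<mu>)) \<and> is_path rng src \<mu>"
proof
  assume p: "is_path rng src (e # \<mu>)"
  show "(\<mu> \<noteq> [] \<longrightarrow> rng e = src (hd \<mu>)) \<and> is_path rng src \<mu>"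
    using p[unfolded is_path_def, rule_format, of 0] p[unfolded is_path_def, rule_format, of "Suc _"]
    by (cases \<mu>) (auto simp: is_path_def)
next
  assume "(\<mu> \<noteq> [] \<longrightarrow> rng e = src (hd \<mu>)) \<and> is_path rng src \<mu>"
  thus "is_path rng src (e # \<mu>)"
    unfolding is_path_def by (cases \<mu>) (auto simp: nth_Cons split: nat.split)
qed

lemma is_path_tl: "is_path rng src \<nu> \<Longrightarrow> is_path rng src (tl \<nu>)"
  by (cases \<nu>) (auto simp: is_path_Cons)

lemma is_path_take: "is_path rng src \<nu> \<Longrightarrow> is_path rng src (take j \<nu>)"
  by (simp add: is_path_def)

definition is_cycle :: "'e set \<Rightarrow> ('e \<Rightarrow> 'v) \<Rightarrow> ('e \<Rightarrow> 'v) \<Rightarrow> 'e list \<Rightarrow> bool" where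
  "is_cycle E1 rng src es \<longleftrightarrow>
     es \<noteq> [] \<and> set es \<subseteq> E1 \<and> is_path rng src es \<and> src (hd es) = rng (last es)"

lemma has_cycle_iff: "has_cycle E1 rng src \<longleftrightarrow> (\<exists>es. is_cycle E1 rng src es)"
  by (simp add: has_cycle_def is_cycle_def is_path_def)

lemma is_cycle_take:
  assumes \<alpha>: "is_cycle E1 rng src \<alpha>" and j: "0 < j" "j < length \<alpha>"
    and return: "src (\<alpha> ! j) = src (\<alpha> ! 0)"
  shows "is_cycle E1 rng src (take j \<alpha>)"
proof -
  have ne: "take j \<alpha> \<noteq> []" using j by force
  have last: "last (take j \<alpha>) = \<alpha> ! (j - 1)"
    using j ne by (simp add: last_conv_nth min_def)
  have "rng (\<alpha> ! (j - 1)) = src (\<alpha> ! Suc (j - 1))"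
    using \<alpha> j unfolding is_cycle_def is_path_def by simp
  hence "src (hd (take j \<alpha>)) = rng (last (take j \<alpha>))"
    using return j ne last by (simp add: hd_conv_nth)
  thus ?thesis
    using \<alpha> ne set_take_subset[of j \<alpha>] by (auto simp: is_cycle_def is_path_take)
qed

lemma suffix_periodic:
  assumes per: "\<And>i. i < length \<nu> \<Longrightarrow> \<nu> ! i = \<alpha> ! (i mod length \<alpha>)"
    and dvd: "length \<alpha> dvd length \<nu>" and ne: "\<nu> \<noteq> []"
  shows "suffix \<alpha> \<nu>"
proof -
  have le: "length \<alpha> \<le> length \<nu>" using dvd ne by (simp add: dvd_imp_le)
  have "drop (length \<nu> - length \<alpha>) \<nu> = \<alpha>"
  proof (rule nth_equalityI)
    fix i assume "i < length (drop (length \<nu> - length \<alpha>) \<nu>)"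
    hence i: "i < length \<alpha>" using le by simp
    have "(length \<nu> - length \<alpha> + i) mod length \<alpha> = i"
      using dvd le i by (metis dvd_minus_mod mod_add_left_eq mod_less dvd_diff_nat dvd_refl
          mod_0_imp_dvd dvd_imp_mod_0 add_0)
    thus "drop (length \<nu> - length \<alpha>) \<nu> ! i = \<alpha> ! i"
      using per[of "length \<nu> - length \<alpha> + i"] i le by simp
  qed (use le in simp)
  thus ?thesis by (metis suffix_drop)
qed

locale first_return_cycle =
  fixes E1 :: "'e set" and rng src :: "'e \<Rightarrow> 'v" and \<alpha> :: "'e list"
  assumes cycle: "is_cycle E1 rng src \<alpha>"
    and first_return: "\<And>j. 0 < j \<Longrightarrow> j < length \<alpha> \<Longrightarrow> src (\<alpha> ! j) \<noteq> src (\<alpha> ! 0)"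

text \<open>A shortest cycle returns to its base vertex only at its end.\<close>

lemma has_cycle_imp_first_return_cycle:
  assumes "has_cycle E1 rng src"
  obtains \<alpha> where "first_return_cycle E1 rng src \<alpha>"
proof -
  obtain \<alpha> where \<alpha>: "is_cycle E1 rng src \<alpha>"
    and shortest: "\<And>\<beta>. is_cycle E1 rng src \<beta> \<Longrightarrow> length \<alpha> \<le> length \<beta>"
    using assms ex_has_least_nat[of "is_cycle E1 rng src" _ length] by (auto simp: has_cycle_iff)
  have "first_return_cycle E1 rng src \<alpha>"
  proof
    fix j assume j: "0 < j" "j < length \<alpha>"
    show "src (\<alpha> ! j) \<noteq> src (\<alpha> ! 0)"
      using shortest[OF is_cycle_take[OF \<alpha> j]] j by (metis length_take min.absorb4 not_le)
  qed (rule \<alpha>)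
  thus ?thesis by (rule that)
qed

subsection \<open>The representation attached to a first-return cycle\<close>

context first_return_cycle
begin

abbreviation n :: nat where
  "n \<equiv> length \<alpha>"

definition base :: 'v where
  "base = src (hd \<alpha>)"

definition paths :: "'e list set" where
  "paths = {\<nu>. set \<nu> \<subseteq> E1 \<and> is_path rng src \<nu>
                \<and> (\<nu> \<noteq> [] \<longrightarrow> rng (last \<nu>) = base) \<and> \<not> suffix \<alpha> \<nu>}"

text \<open>The empty path plays the role of \<alpha> itself: its first edge is hd \<alpha>, and removing
  that edge leaves tl \<alpha>.\<close>

definition path_src :: "'e list \<Rightarrow> 'v" where
  "path_src \<nu> = (if \<nu> = [] then base else src (hd \<nu>))"

definition first_edge :: "'e list \<Rightarrow> 'e" where
  "first_edge \<nu> = (if \<nu> = [] then hd \<alpha> else hd \<nu>)"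

definition shift :: "'e list \<Rightarrow> 'e list" where
  "shift \<nu> = (if \<nu> = [] then tl \<alpha> else tl \<nu>)"

definition phase :: "complex \<Rightarrow> 'e list \<Rightarrow> complex" where
  "phase z \<nu> = (if \<nu> = [] then z else 1)"

definition S_dom :: "'e \<Rightarrow> 'e list set" where
  "S_dom e = {\<nu> \<in> paths. first_edge \<nu> = e}"

definition S_rep :: "complex \<Rightarrow> 'e \<Rightarrow> 'e list opr" where
  "S_rep z e = wcomp paths (S_dom e) shift (phase z)"

definition P_rep :: "'v \<Rightarrow> 'e list opr" where
  "P_rep w = indic_op paths {\<nu> \<in> paths. path_src \<nu> = w}"

lemma cycle_ne: "\<alpha> \<noteq> []" and cycle_edges: "set \<alpha> \<subseteq> E1" and cycle_path: "is_path rng src \<alpha>"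
  and cycle_closed: "src (hd \<alpha>) = rng (last \<alpha>)"
  using cycle by (simp_all add: is_cycle_def)

lemma Nil_in_paths: "[] \<in> paths"
  using cycle_ne by (simp add: paths_def is_path_def)

lemma paths_edges: "\<nu> \<in> paths \<Longrightarrow> set \<nu> \<subseteq> E1"
  by (simp add: paths_def)

lemma paths_tl: "\<nu> \<in> paths \<Longrightarrow> tl \<nu> \<in> paths"
  by (cases \<nu>) (auto simp: paths_def is_path_Cons suffix_Cons)

lemma tl_cycle_in_paths: "tl \<alpha> \<in> paths"
proof -
  have "tl \<alpha> \<noteq> [] \<Longrightarrow> rng (last (tl \<alpha>)) = base"
    using cycle_closed by (simp add: base_def last_tl)
  moreover have "\<not> suffix \<alpha> (tl \<alpha>)"
    using cycle_ne suffix_length_le[of \<alpha> "tl \<alpha>"] by (cases \<alpha>) auto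
  moreover have "set (tl \<alpha>) \<subseteq> E1" using cycle_edges by (cases \<alpha>) auto
  ultimately show ?thesis using is_path_tl[OF cycle_path] by (simp add: paths_def)
qed

lemma Cons_in_paths:
  assumes \<mu>: "\<mu> \<in> paths" and e: "e \<in> E1" and rng_e: "rng e = path_src \<mu>" and ne: "e # \<mu> \<noteq> \<alpha>"
  shows "e # \<mu> \<in> paths"
  using assms by (auto simp: paths_def is_path_Cons path_src_def suffix_Cons)

lemma shift_in_paths: "\<nu> \<in> paths \<Longrightarrow> shift \<nu> \<in> paths"
  using paths_tl tl_cycle_in_paths by (simp add: shift_def)

lemma path_src_shift:
  assumes "\<nu> \<in> S_dom e"
  shows "path_src (shift \<nu>) = rng e"
proof (cases "\<nu> = []")
  case True
  hence e: "e = hd \<alpha>" using assms by (simp add: S_dom_def first_edge_def)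
  show ?thesis
  proof (cases "tl \<alpha> = []")
    case True
    hence "last \<alpha> = e" using e cycle_ne by (metis hd_Cons_tl last_ConsL)
    thus ?thesis using True \<open>\<nu> = []\<close> cycle_closed e by (simp add: shift_def path_src_def base_def)
  next
    case False
    hence "rng (hd \<alpha>) = src (hd (tl \<alpha>))"
      using cycle_path cycle_ne by (cases \<alpha>) (auto simp: is_path_Cons)
    thus ?thesis using False \<open>\<nu> = []\<close> e by (simp add: shift_def path_src_def)
  qed
next
  case False
  then obtain \<mu> where \<nu>: "\<nu> = e # \<mu>" using assms by (cases \<nu>) (auto simp: S_dom_def first_edge_def)
  thus ?thesis using assms by (cases \<mu>) (auto simp: S_dom_def paths_def shift_def path_src_def is_path_Cons)
qed

lemma shift_image_S_dom:
  assumes e: "e \<in> E1"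
  shows "shift ` S_dom e = {\<mu> \<in> paths. path_src \<mu> = rng e}"
proof
  show "shift ` S_dom e \<subseteq> {\<mu> \<in> paths. path_src \<mu> = rng e}"
    using shift_in_paths path_src_shift by (auto simp: S_dom_def)
next
  show "{\<mu> \<in> paths. path_src \<mu> = rng e} \<subseteq> shift ` S_dom e"
  proof
    fix \<mu> assume \<mu>: "\<mu> \<in> {\<mu> \<in> paths. path_src \<mu> = rng e}"
    show "\<mu> \<in> shift ` S_dom e"
    proof (cases "e # \<mu> = \<alpha>")
      case True
      hence "[] \<in> S_dom e" "shift [] = \<mu>"
        using Nil_in_paths by (auto simp: S_dom_def first_edge_def shift_def)
      thus ?thesis by (metis image_eqI)
    next
      case False
      hence "e # \<mu> \<in> S_dom e" using Cons_in_paths[of \<mu> e] \<mu> e by (simp add: S_dom_def first_edge_def)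
      moreover have "shift (e # \<mu>) = \<mu>" by (simp add: shift_def)
      ultimately show ?thesis by (metis image_eqI)
    qed
  qed
qed

lemma inj_on_shift: "inj_on shift (S_dom e)"
proof
  fix \<nu> \<nu>' assume \<nu>: "\<nu> \<in> S_dom e" and \<nu>': "\<nu>' \<in> S_dom e" and eq: "shift \<nu> = shift \<nu>'"
  have "\<nu> = \<alpha>" if "\<nu> \<in> S_dom e" "\<nu>' \<in> S_dom e" "shift \<nu> = shift \<nu>'" "\<nu> \<noteq> []" "\<nu>' = []"
    for \<nu> \<nu>'
    using that cycle_ne by (cases \<nu>) (auto simp: S_dom_def first_edge_def shift_def)
  moreover have "\<alpha> \<notin> paths" by (auto simp: paths_def)
  ultimately show "\<nu> = \<nu>'"
    using \<nu> \<nu>' eq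
    by (cases "\<nu> = []"; cases "\<nu>' = []")
       (auto simp: S_dom_def first_edge_def shift_def intro: list.expand)
qed

lemma first_edge_in_E1: "\<nu> \<in> paths \<Longrightarrow> first_edge \<nu> \<in> E1"
  using cycle_edges cycle_ne paths_edges[of \<nu>] by (auto simp: first_edge_def)

lemma src_first_edge: "src (first_edge \<nu>) = path_src \<nu>"
  by (simp add: first_edge_def path_src_def base_def)

lemma S_rep_admissible: "cmod z = 1 \<Longrightarrow> wcomp_admissible paths (S_dom e) shift (phase z)"
  using inj_on_shift shift_in_paths by (auto simp: wcomp_admissible_def S_dom_def phase_def)

lemma S_rep_has_adjoint: "cmod z = 1 \<Longrightarrow> has_adjoint paths (S_rep z e)"
  unfolding S_rep_def by (intro wcomp_has_adjoint S_rep_admissible)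

lemma S_rep_bop: "cmod z = 1 \<Longrightarrow> bop paths (S_rep z e)"
  using S_rep_has_adjoint by (simp add: has_adjoint_def)

lemma adj_S_rep: "cmod z = 1 \<Longrightarrow> adj paths (S_rep z e) = wcomp_adj paths (S_dom e) shift (phase z)"
  unfolding S_rep_def by (intro adj_wcomp S_rep_admissible)

lemma P_rep_proj: "is_proj paths (P_rep w)"
  unfolding is_proj_def P_rep_def
  by (simp add: wcomp_bop indic_op_admissible indic_op_comp adj_indic_op)

lemma P_rep_orth: "w \<noteq> w' \<Longrightarrow> P_rep w \<circ> P_rep w' = zero_op"
  unfolding P_rep_def by (auto simp: indic_op_comp wcomp_def zero_op_def fun_eq_iff)

lemma S_rep_adj_comp:
  assumes z: "cmod z = 1" and e: "e \<in> E1"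
  shows "adj paths (S_rep z e) \<circ> S_rep z e = P_rep (rng e)"
  unfolding adj_S_rep[OF z] unfolding S_rep_def P_rep_def
  using wcomp_adj_comp[OF S_rep_admissible[OF z]] shift_image_S_dom[OF e] by simp

lemma S_rep_comp_adj:
  assumes z: "cmod z = 1"
  shows "S_rep z e \<circ> adj paths (S_rep z e) = indic_op paths (S_dom e)"
  unfolding adj_S_rep[OF z] unfolding S_rep_def
  using wcomp_comp_adj[OF S_rep_admissible[OF z]] by simp

lemma S_rep_range_le: "cmod z = 1 \<Longrightarrow> op_le paths (S_rep z e \<circ> adj paths (S_rep z e)) (P_rep (src e))"
  unfolding S_rep_comp_adj P_rep_def
  by (rule op_le_indic_op) (auto simp: S_dom_def src_first_edge[symmetric])

lemma S_rep_orth: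
  assumes "e \<noteq> e'"
  shows "l2inner paths (S_rep z e f) (S_rep z e' g) = 0"
proof -
  have "cnj (S_rep z e f \<nu>) * S_rep z e' g \<nu> = 0" for \<nu>
    using assms by (cases "\<nu> \<in> S_dom e") (auto simp: S_rep_def S_dom_def wcomp_outside)
  thus ?thesis unfolding l2inner_def by (simp add: infsum_0)
qed

text \<open>The ranges S_dom e of the edges e with src e = w partition the paths starting at w.\<close>

lemma P_rep_eq_sum:
  assumes z: "cmod z = 1" and fin: "finite {e \<in> E1. src e = w}"
  shows "P_rep w = (\<lambda>f i. \<Sum>e\<in>{e \<in> E1. src e = w}. S_rep z e (adj paths (S_rep z e) f) i)"
proof (intro ext)
  fix f i
  have "S_rep z e (adj paths (S_rep z e) f) i = indic_op paths (S_dom e) f i" for e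
    using S_rep_comp_adj[OF z, of e] by (metis comp_apply)
  hence "(\<Sum>e\<in>{e \<in> E1. src e = w}. S_rep z e (adj paths (S_rep z e) f) i)
      = (\<Sum>e\<in>{e \<in> E1. src e = w}. if e = first_edge i then indic_op paths paths f i else 0)"
    by (intro sum.cong) (auto simp: S_dom_def wcomp_def)
  also have "\<dots> = P_rep w f i"
    using fin first_edge_in_E1 src_first_edge by (auto simp: sum.delta' P_rep_def wcomp_def)
  finally show "P_rep w f i = (\<Sum>e\<in>{e \<in> E1. src e = w}. S_rep z e (adj paths (S_rep z e) f) i)" ..
qed

lemma rep_ck_family: "cmod z = 1 \<Longrightarrow> ck_family E0 E1 rng src paths P_rep (S_rep z)"
  unfolding ck_family_def regular_vertex_def
  using P_rep_proj P_rep_orth S_rep_bop S_rep_orth S_rep_adj_comp S_rep_range_le P_rep_eq_sum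
  by auto

definition ext_path :: "'e list \<Rightarrow> nat \<Rightarrow> 'e" where
  "ext_path \<nu> i = (if i < length \<nu> then \<nu> ! i else \<alpha> ! ((i - length \<nu>) mod n))"

definition cylinder :: "'e list \<Rightarrow> 'e list set" where
  "cylinder w = {\<nu> \<in> paths. \<forall>i < length w. ext_path \<nu> i = w ! i}"

definition cycle_pow :: "nat \<Rightarrow> 'e list" where
  "cycle_pow k = map (\<lambda>i. \<alpha> ! (i mod n)) [0..<k * n]"

lemma ext_path_0: "ext_path \<nu> 0 = first_edge \<nu>"
  using cycle_ne by (cases \<nu>) (auto simp: ext_path_def first_edge_def hd_conv_nth)

lemma ext_path_shift: "ext_path (shift \<nu>) i = ext_path \<nu> (Suc i)"
proof (cases "\<nu> = []")
  case True
  have "ext_path (tl \<alpha>) i = \<alpha> ! (Suc i mod n)"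
  proof (cases "i < n - 1")
    case False
    hence "Suc i mod n = (i - (n - 1)) mod n"
      by (metis Suc_diff_1 Suc_diff_le le_add_diff_inverse2 length_greater_0_conv cycle_ne
          linorder_not_le mod_add_self2 not_less_eq_eq add.commute diff_Suc_Suc)
    thus ?thesis using False by (simp add: ext_path_def)
  qed (auto simp: ext_path_def nth_tl)
  thus ?thesis using True by (simp add: ext_path_def shift_def)
qed (cases \<nu>; auto simp: ext_path_def shift_def)

lemma cylinder_subset: "cylinder w \<subseteq> paths"
  by (auto simp: cylinder_def)

lemma cylinder_Nil: "cylinder [] = paths"
  by (simp add: cylinder_def)

lemma cylinder_Cons: "{\<nu> \<in> S_dom e. shift \<nu> \<in> cylinder w} = cylinder (e # w)"
proof -
  have "(\<forall>i < Suc (length w). ext_path \<nu> i = (e # w) ! i)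
      \<longleftrightarrow> first_edge \<nu> = e \<and> (\<forall>i < length w. ext_path (shift \<nu>) i = w ! i)" for \<nu>
    by (auto simp: All_less_Suc2 ext_path_0 ext_path_shift)
  thus ?thesis using shift_in_paths by (auto simp: cylinder_def S_dom_def)
qed

lemma word_op_comp_adj_eq_cylinder:
  assumes z: "cmod z = 1"
  shows "word_op paths (S_rep z) w \<circ> word_adj paths (S_rep z) w = indic_op paths (cylinder w)"
proof (induction w)
  case Nil show ?case by (simp only: word_op.simps word_adj.simps indic_op_comp[OF subset_refl] Int_absorb cylinder_Nil)
next
  case (Cons e w)
  have "word_op paths (S_rep z) (e # w) \<circ> word_adj paths (S_rep z) (e # w)
      = S_rep z e \<circ> (word_op paths (S_rep z) w \<circ> word_adj paths (S_rep z) w) \<circ> adj paths (S_rep z e)"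
    by (simp add: o_assoc)
  also have "\<dots> = indic_op paths (cylinder (e # w))"
    unfolding Cons.IH adj_S_rep[OF z] unfolding S_rep_def
    using wcomp_indic_op_adj[OF S_rep_admissible[OF z] cylinder_subset] cylinder_Cons by simp
  finally show ?case .
qed

text \<open>A nonempty path that follows \<alpha> \<alpha> \<alpha> ... and ends at the base vertex must, by the
  first-return property, stop at the end of a copy of \<alpha>.\<close>

lemma periodic_path_notin_paths:
  assumes \<nu>: "\<nu> \<in> paths" and ne: "\<nu> \<noteq> []" and per: "\<And>i. i < length \<nu> \<Longrightarrow> \<nu> ! i = \<alpha> ! (i mod n)"
  shows False
proof -
  define m where "m = length \<nu>"
  have n: "0 < n" and m: "0 < m" using cycle_ne ne by (simp_all add: m_def)
  define j where "j = (m - 1) mod n"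
  have "last \<nu> = \<alpha> ! j"
    using per[of "m - 1"] ne m by (simp add: last_conv_nth m_def j_def)
  hence rng_j: "rng (\<alpha> ! j) = src (\<alpha> ! 0)"
    using \<nu> ne cycle_ne by (simp add: paths_def base_def hd_conv_nth)
  have "Suc j = n"
  proof (rule ccontr)
    assume "Suc j \<noteq> n"
    hence "Suc j < n" using n unfolding j_def by (metis Suc_lessI mod_less_divisor)
    hence "rng (\<alpha> ! j) = src (\<alpha> ! Suc j)" and "src (\<alpha> ! Suc j) \<noteq> src (\<alpha> ! 0)"
      using cycle_path first_return[of "Suc j"] by (auto simp: is_path_def)
    thus False using rng_j by simp
  qed
  hence "n dvd m"
    using m by (metis j_def mod_Suc Suc_diff_1 mod_0_imp_dvd)
  hence "suffix \<alpha> \<nu>" using suffix_periodic[OF per _ ne] by (simp add: m_def)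
  thus False using \<nu> by (simp add: paths_def)
qed

lemma Nil_in_cylinder_pow: "[] \<in> cylinder (cycle_pow k)"
  using Nil_in_paths by (auto simp: cylinder_def ext_path_def cycle_pow_def)

lemma notin_cylinder_pow:
  assumes ne: "\<nu> \<noteq> []" and le: "length \<nu> \<le> k"
  shows "\<nu> \<notin> cylinder (cycle_pow k)"
proof
  assume \<nu>: "\<nu> \<in> cylinder (cycle_pow k)"
  have "length \<nu> \<le> k * n" using le cycle_ne by (cases \<alpha>) auto
  have "\<nu> ! i = \<alpha> ! (i mod n)" if i: "i < length \<nu>" for i
  proof -
    have "ext_path \<nu> i = cycle_pow k ! i"
      using \<nu> i \<open>length \<nu> \<le> k * n\<close> by (simp add: cylinder_def cycle_pow_def)
    thus ?thesis using i \<open>length \<nu> \<le> k * n\<close> by (simp add: ext_path_def cycle_pow_def)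
  qed
  thus False using periodic_path_notin_paths ne \<nu> cylinder_subset by blast
qed

lemma word_op_basis_vec:
  assumes z: "cmod z = 1"
  shows "\<mu> \<in> paths \<Longrightarrow> word_op paths (S_rep z) \<mu> (basis_vec []) = basis_vec \<mu>"
proof (induction \<mu>)
  case Nil thus ?case by (simp add: indic_op_id basis_vec_l2 Nil_in_paths)
next
  case (Cons e \<mu>)
  have "e # \<mu> \<in> S_dom e" using Cons.prems by (simp add: S_dom_def first_edge_def)
  hence "S_rep z e (basis_vec \<mu>) = basis_vec (e # \<mu>)"
    using wcomp_basis_vec[OF S_rep_admissible[OF z, of e], of "e # \<mu>"]
    by (simp add: S_rep_def shift_def phase_def)
  thus ?case using Cons.IH[OF paths_tl[OF Cons.prems, simplified]] by simp
qed

lemma word_adj_apply_Nil: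
  assumes z: "cmod z = 1"
  shows "f \<in> l2 paths \<Longrightarrow> \<mu> \<in> paths \<Longrightarrow> word_adj paths (S_rep z) \<mu> f [] = f \<mu>"
proof (induction \<mu> arbitrary: f)
  case Nil thus ?case by (simp add: indic_op_id)
next
  case (Cons e \<mu>)
  have "e # \<mu> \<in> S_dom e" using Cons.prems(2) by (simp add: S_dom_def first_edge_def)
  hence "adj paths (S_rep z e) f \<mu> = f (e # \<mu>)"
    using wcomp_adj_apply[OF S_rep_admissible[OF z] Cons.prems(1), of "e # \<mu>"]
    by (simp add: adj_S_rep[OF z] shift_def phase_def)
  moreover have "adj paths (S_rep z e) f \<in> l2 paths"
    using S_rep_has_adjoint[OF z] Cons.prems(1) by (simp add: has_adjoint_def bop_l2)
  ultimately show ?case using Cons.IH paths_tl[OF Cons.prems(2)] by simp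
qed

lemma S_rep_hd_cycle_basis_vec:
  assumes z: "cmod z = 1"
  shows "S_rep z (hd \<alpha>) (basis_vec (tl \<alpha>)) = (\<lambda>i. z * basis_vec [] i)"
proof -
  have "[] \<in> S_dom (hd \<alpha>)" using Nil_in_paths by (simp add: S_dom_def first_edge_def)
  thus ?thesis
    using wcomp_basis_vec[OF S_rep_admissible[OF z, of "hd \<alpha>"], of "[]"]
    by (simp add: S_rep_def shift_def phase_def)
qed

lemma word_op_cycle_basis_vec:
  assumes z: "cmod z = 1"
  shows "word_op paths (S_rep z) \<alpha> (basis_vec []) = (\<lambda>i. z * basis_vec [] i)"
proof -
  have "word_op paths (S_rep z) \<alpha> = S_rep z (hd \<alpha>) \<circ> word_op paths (S_rep z) (tl \<alpha>)"
    using cycle_ne by (metis list.collapse word_op.simps(2))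
  thus ?thesis
    using word_op_basis_vec[OF z tl_cycle_in_paths] S_rep_hd_cycle_basis_vec[OF z] by simp
qed

lemma set_cycle_pow: "set (cycle_pow k) \<subseteq> E1"
  using cycle_edges cycle_ne by (auto simp: cycle_pow_def)

context
  fixes z K
  assumes z: "cmod z = 1" and K: "closed_subspace paths K"
    and S_inv: "\<And>e. e \<in> E1 \<Longrightarrow> S_rep z e ` K \<subseteq> K"
    and adj_inv: "\<And>e. e \<in> E1 \<Longrightarrow> adj paths (S_rep z e) ` K \<subseteq> K"
begin

lemma cylinder_pow_proj_mem_invariant:
  assumes h: "h \<in> K"
  shows "indic_op paths (cylinder (cycle_pow k)) h \<in> K"
proof -
  have "word_op paths (S_rep z) (cycle_pow k) (word_adj paths (S_rep z) (cycle_pow k) h) \<in> K"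
    using set_cycle_pow
    by (intro word_op_mem_invariant[where S="S_rep z", OF K S_inv]
        word_adj_mem_invariant[where S="S_rep z", OF K adj_inv] h)
  thus ?thesis using word_op_comp_adj_eq_cylinder[OF z, of "cycle_pow k"] by (metis comp_apply)
qed

text \<open>Projecting onto the shrinking cylinders of \<alpha>^k isolates the coordinate at [].\<close>

lemma basis_vec_Nil_mem_invariant:
  assumes h: "h \<in> K" and h0: "h [] \<noteq> 0"
  shows "basis_vec [] \<in> K"
proof -
  have hl2: "h \<in> l2 paths" using closed_subspace_l2[OF K h] .
  have "(\<lambda>i. h [] * basis_vec [] i) \<in> K"
  proof (rule closed_subspace_memI[OF K l2_scale[OF basis_vec_l2[OF Nil_in_paths]] hl2])
    fix F :: "'e list set" assume F: "finite F" "F \<subseteq> paths"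
    define k where "k = Max (insert 0 (length ` F))"
    let ?g = "indic_op paths (cylinder (cycle_pow k)) h"
    have "?g \<nu> = h [] * basis_vec [] \<nu>" if "\<nu> \<in> F" for \<nu>
    proof (cases "\<nu> = []")
      case False
      hence "\<nu> \<notin> cylinder (cycle_pow k)"
        using notin_cylinder_pow that F(1) by (simp add: k_def)
      thus ?thesis using False hl2 by (simp add: wcomp_apply)
    qed (use Nil_in_cylinder_pow hl2 in \<open>simp add: wcomp_apply\<close>)
    hence "\<forall>i\<in>F. ?g i = h [] * basis_vec [] i" by blast
    moreover have "cmod (h [] * basis_vec [] i - ?g i) \<le> cmod (h i)" for i
      using Nil_in_cylinder_pow[of k] hl2 by (cases "i = []") (auto simp: wcomp_apply)
    ultimately show "\<exists>g\<in>K. (\<forall>i\<in>F. g i = h [] * basis_vec [] i)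
        \<and> (\<forall>i\<in>paths. cmod (h [] * basis_vec [] i - g i) \<le> cmod (h i))"
      using cylinder_pow_proj_mem_invariant[OF h] by blast
  qed
  from closed_subspace_scale[OF K this, of "1 / h []"] show ?thesis using h0 by simp
qed

lemma invariant_subspace_trivial: "K = {\<lambda>i. 0} \<or> K = l2 paths"
proof (cases "K \<subseteq> {\<lambda>i. 0}")
  case True thus ?thesis using closed_subspace_zero[OF K] by blast
next
  case False
  then obtain f where f: "f \<in> K" and "f \<noteq> (\<lambda>i. 0)" by blast
  hence "\<exists>\<mu>. f \<mu> \<noteq> 0" by (simp add: fun_eq_iff)
  then obtain \<mu> where f\<mu>: "f \<mu> \<noteq> 0" ..
  have fl2: "f \<in> l2 paths" using closed_subspace_l2[OF K f] .
  have \<mu>: "\<mu> \<in> paths" using f\<mu> l2_zero_outside[OF fl2] by blast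
  have "word_adj paths (S_rep z) \<mu> f \<in> K"
    using word_adj_mem_invariant[where S="S_rep z", OF K adj_inv paths_edges[OF \<mu>] f] .
  moreover have "word_adj paths (S_rep z) \<mu> f [] = f \<mu>"
    using word_adj_apply_Nil[OF z fl2 \<mu>] .
  ultimately have Nil: "basis_vec [] \<in> K" using basis_vec_Nil_mem_invariant f\<mu> by simp
  have "basis_vec \<nu> \<in> K" if "\<nu> \<in> paths" for \<nu>
    using word_op_mem_invariant[where S="S_rep z", OF K S_inv paths_edges[OF that] Nil]
      word_op_basis_vec[OF z that]
    by simp
  thus ?thesis using closed_subspace_eq_l2[OF K] by blast
qed

end

lemma S_rep_nonzero:
  assumes z: "cmod z = 1"
  shows "S_rep z (hd \<alpha>) \<noteq> zero_op"
proof
  assume "S_rep z (hd \<alpha>) = zero_op"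
  hence "z * basis_vec [] [] = 0"
    using fun_cong[OF S_rep_hd_cycle_basis_vec[OF z], of "[]"] by (simp add: zero_op_def)
  thus False using z by simp
qed

lemma rep_irreducible:
  assumes z: "cmod z = 1"
  shows "ck_irreducible E0 E1 rng src paths P_rep (S_rep z)"
  unfolding ck_irreducible_def
proof (intro conjI allI impI)
  show "ck_family E0 E1 rng src paths P_rep (S_rep z)" by (rule rep_ck_family[OF z])
  have "hd \<alpha> \<in> E1" using cycle_edges cycle_ne hd_in_set by blast
  thus "(\<exists>v\<in>E0. P_rep v \<noteq> zero_op) \<or> (\<exists>e\<in>E1. S_rep z e \<noteq> zero_op)"
    using S_rep_nonzero[OF z] by blast
next
  fix K
  assume "closed_subspace paths K \<and> (\<forall>v\<in>E0. P_rep v ` K \<subseteq> K)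
    \<and> (\<forall>e\<in>E1. S_rep z e ` K \<subseteq> K \<and> adj paths (S_rep z e) ` K \<subseteq> K)"
  thus "K = {\<lambda>i. 0} \<or> K = l2 paths" by (intro invariant_subspace_trivial[OF z]) auto
qed

context
  fixes z z' U
  assumes z: "cmod z = 1" and z': "cmod z' = 1" and U: "unitary_map paths paths U"
    and intertw: "\<And>e f. e \<in> E1 \<Longrightarrow> f \<in> l2 paths \<Longrightarrow> U (S_rep z e f) = S_rep z' e (U f)"
begin

lemma intertwines_word_op:
  "set w \<subseteq> E1 \<Longrightarrow> f \<in> l2 paths \<Longrightarrow>
    U (word_op paths (S_rep z) w f) = word_op paths (S_rep z') w (U f)"
  by (rule unitary_map_intertwines_word_op[where S="S_rep z",
        OF U S_rep_has_adjoint[OF z] S_rep_has_adjoint[OF z'] intertw])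

lemma intertwines_word_adj:
  "set w \<subseteq> E1 \<Longrightarrow> f \<in> l2 paths \<Longrightarrow>
    U (word_adj paths (S_rep z) w f) = word_adj paths (S_rep z') w (U f)"
  by (rule unitary_map_intertwines_word_adj[where S="S_rep z",
        OF U S_rep_has_adjoint[OF z] S_rep_has_adjoint[OF z'] intertw])

text \<open>U commutes with the projections onto the cylinders of \<alpha>^k, which all contain [] and
  shrink to it, so U preserves the line spanned by the basis vector of [].\<close>

lemma intertwiner_basis_vec_Nil:
  obtains c where "c \<noteq> 0" "U (basis_vec []) = (\<lambda>i. c * basis_vec [] i)"
proof -
  define u where "u = U (basis_vec [])"
  have \<delta>: "basis_vec [] \<in> l2 paths" by (rule basis_vec_l2[OF Nil_in_paths])
  have u: "u \<in> l2 paths" unfolding u_def by (rule unitary_map_l2[OF U \<delta>])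
  have cyl_u: "indic_op paths (cylinder (cycle_pow k)) u = u" for k
  proof -
    have "indic_op paths (cylinder (cycle_pow k)) (basis_vec []) = basis_vec []"
      using \<delta> Nil_in_cylinder_pow[of k] by (auto simp: wcomp_apply split: split_indicator)
    hence "U (word_op paths (S_rep z) (cycle_pow k) (word_adj paths (S_rep z) (cycle_pow k) (basis_vec [])))
        = u"
      using word_op_comp_adj_eq_cylinder[OF z, of "cycle_pow k"] by (metis comp_apply u_def)
    moreover have "word_adj paths (S_rep z) (cycle_pow k) (basis_vec []) \<in> l2 paths"
      using word_adj_l2[where S="S_rep z", OF S_rep_has_adjoint[OF z] set_cycle_pow \<delta>] .
    ultimately have "word_op paths (S_rep z') (cycle_pow k) (word_adj paths (S_rep z') (cycle_pow k) u) = u"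
      using intertwines_word_op[OF set_cycle_pow] intertwines_word_adj[OF set_cycle_pow \<delta>]
      by (simp add: u_def)
    thus ?thesis using word_op_comp_adj_eq_cylinder[OF z', of "cycle_pow k"] by (metis comp_apply)
  qed
  have "u \<nu> = 0" if "\<nu> \<noteq> []" for \<nu>
    using fun_cong[OF cyl_u[of "length \<nu>"], of \<nu>] notin_cylinder_pow[OF that order_refl] u
    by (simp add: wcomp_apply)
  hence u_eq: "u = (\<lambda>i. u [] * basis_vec [] i)" by (auto split: split_indicator)
  have "u [] \<noteq> 0"
  proof
    assume "u [] = 0"
    hence eq: "U (basis_vec []) = U (\<lambda>i. 0)"
      using u_eq unitary_map_scale[OF U \<delta>, of 0] by (simp add: u_def)
    have "inj_on U (l2 paths)" using U by (simp add: unitary_map_def bij_betw_def)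
    from inj_onD[OF this eq \<delta> l2_zero] have "basis_vec ([] :: 'e list) = (\<lambda>i. 0)" .
    thus False by (metis indicator_simps(1) insertI1 zero_neq_one)
  qed
  thus ?thesis using that u_eq by (simp add: u_def)
qed

lemma intertwiner_phase_eq: "z = z'"
proof -
  obtain c where c: "c \<noteq> 0" "U (basis_vec []) = (\<lambda>i. c * basis_vec [] i)"
    by (rule intertwiner_basis_vec_Nil)
  have \<delta>: "basis_vec [] \<in> l2 paths" by (rule basis_vec_l2[OF Nil_in_paths])
  have "U (word_op paths (S_rep z) \<alpha> (basis_vec [])) = (\<lambda>i. z * (c * basis_vec [] i))"
    using word_op_cycle_basis_vec[OF z] unitary_map_scale[OF U \<delta>] c(2) by simp
  moreover have "U (word_op paths (S_rep z) \<alpha> (basis_vec [])) = (\<lambda>i. c * (z' * basis_vec [] i))"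
    using intertwines_word_op[OF cycle_edges \<delta>] c(2) word_op_cycle_basis_vec[OF z']
      word_op_scale[where S="S_rep z'", OF S_rep_bop[OF z'] cycle_edges \<delta>] by simp
  ultimately have "z * c = c * z'" by (metis indicator_simps(1) insertI1 mult.right_neutral)
  thus ?thesis using c(1) by simp
qed

end

lemma rep_unit_equiv_imp_eq:
  assumes "cmod z = 1" "cmod z' = 1"
    and "unit_equiv E0 E1 (paths, P_rep, S_rep z) (paths, P_rep, S_rep z')"
  shows "z = z'"
  using assms intertwiner_phase_eq unfolding unit_equiv_def by auto

end

subsection \<open>Uncountably many inequivalent irreducible representations\<close>

lemma countable_if_inequivalent_reps:
  assumes classes: "countable (A // {(a, b). a \<in> A \<and> b \<in> A \<and> R a b})"
    and rep: "\<And>z. z \<in> Z \<Longrightarrow> rep z \<in> A"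
    and refl: "\<And>a. a \<in> A \<Longrightarrow> R a a"
    and inequiv: "\<And>z z'. z \<in> Z \<Longrightarrow> z' \<in> Z \<Longrightarrow> R (rep z) (rep z') \<Longrightarrow> z = z'"
  shows "countable Z"
proof -
  define eqv where "eqv = {(a, b). a \<in> A \<and> b \<in> A \<and> R a b}"
  define cls where "cls z = eqv `` {rep z}" for z
  have "inj_on cls Z"
  proof
    fix z z' assume z: "z \<in> Z" and z': "z' \<in> Z" and "cls z = cls z'"
    moreover have "rep z' \<in> cls z'" using rep[OF z'] refl by (simp add: cls_def eqv_def)
    ultimately show "z = z'" using inequiv[OF z z'] by (auto simp: cls_def eqv_def)
  qed
  moreover have "cls ` Z \<subseteq> A // eqv" using rep by (auto simp: cls_def intro: quotientI)
  ultimately show ?thesis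
    using classes countable_subset countable_image_inj_on unfolding eqv_def by blast
qed

lemma uncountable_unit_circle: "uncountable (sphere (0::complex) 1)"
  by (rule connected_uncountable[of _ 1 "-1"]) (auto intro: connected_sphere)

text \<open>\<^const>\<open>irreps\<close> realises representations on spaces indexed by lists over 'v + 'e,
  while the representation above is indexed by paths; so it is built for the copy Inr ` E1 of
  the edge set and transported back.\<close>

lemma has_cycle_Inr:
  "has_cycle E1 rng src \<Longrightarrow> has_cycle (Inr ` E1 :: ('v + 'e) set) (\<lambda>x. rng (projr x)) (\<lambda>x. src (projr x))"
  unfolding has_cycle_def
  by (elim exE, rule_tac x = "map Inr es" in exI) (auto simp: hd_map last_map)

lemma ck_irreducible_Inr:
  assumes "ck_irreducible E0 (Inr ` E1 :: ('v + 'e) set) (\<lambda>x. rng (projr x)) (\<lambda>x. src (projr x)) X P S"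
  shows "ck_irreducible E0 E1 rng src X P (\<lambda>e. S (Inr e))"
proof -
  have edges: "{x \<in> (Inr ` E1 :: ('v + 'e) set). src (projr x) = w} = Inr ` {e \<in> E1. src e = w}" for w
    by auto
  have "regular_vertex (Inr ` E1 :: ('v + 'e) set) (\<lambda>x. src (projr x)) w \<longleftrightarrow> regular_vertex E1 src w"
    for w
    unfolding regular_vertex_def edges by (simp add: finite_image_iff)
  thus ?thesis
    using assms unfolding ck_irreducible_def ck_family_def edges by (simp add: sum.reindex)
qed

lemma unit_equiv_refl: "unit_equiv E0 E1 a a"
proof -
  have "unitary_map X X (\<lambda>f. f)" for X :: "'i set"
    by (simp add: unitary_map_def bij_betw_def)
  thus ?thesis by (auto simp: unit_equiv_def split: prod.split)
qed

lemma unit_equiv_Inr: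
  "unit_equiv E0 E1 (X, P, \<lambda>e. S (Inr e)) (X, P, \<lambda>e. S' (Inr e))
    \<Longrightarrow> unit_equiv E0 (Inr ` E1 :: ('v + 'e) set) (X, P, S) (X, P, S')"
  unfolding unit_equiv_def by auto

theorem lemma4p2:
  fixes E0 :: "'v set" and E1 :: "'e set" and rng src :: "'e \<Rightarrow> 'v"
  assumes "rng ` E1 \<subseteq> E0" and "src ` E1 \<subseteq> E0"
    and "countable (irrep_classes E0 E1 rng src)"
  shows "\<not> has_cycle E1 rng src"
proof
  assume "has_cycle E1 rng src"
  then obtain \<alpha> where
    "first_return_cycle (Inr ` E1 :: ('v + 'e) set) (\<lambda>x. rng (projr x)) (\<lambda>x. src (projr x)) \<alpha>"
    using has_cycle_imp_first_return_cycle[OF has_cycle_Inr] by blast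
  then interpret C: first_return_cycle "Inr ` E1 :: ('v + 'e) set" "\<lambda>x. rng (projr x)"
    "\<lambda>x. src (projr x)" \<alpha> .
  define rep where "rep z = (C.paths, C.P_rep, \<lambda>e. C.S_rep z (Inr e))" for z
  have "countable (sphere (0::complex) 1)"
  proof (rule countable_if_inequivalent_reps[OF assms(3)[unfolded irrep_classes_def]])
    show "rep z \<in> irreps E0 E1 rng src" if "z \<in> sphere 0 1" for z
      using ck_irreducible_Inr[OF C.rep_irreducible] that by (simp add: rep_def irreps_def)
    show "z = z'" if "z \<in> sphere 0 1" "z' \<in> sphere 0 1" "unit_equiv E0 E1 (rep z) (rep z')" for z z'
      using C.rep_unit_equiv_imp_eq[OF _ _ unit_equiv_Inr[OF that(3)[unfolded rep_def]]] that by simp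
  qed (rule unit_equiv_refl)
  thus False using uncountable_unit_circle by blast
qed

end
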